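(* The equation $x^4+9x^2y^2+27y^4=z^2$ has no solution $(x,y,z)\in\mathbb{Z}^3$ with $x,y,z$ all nonzero. *)

theory Defs
  imports Main
begin

end

theory Submission
  imports Defs "HOL-Computational_Algebra.Nth_Powers"
begin

(*
  Descent through the auxiliary quartic N^2 = m^4 - 18 m^2 n^2 - 27 n^4.
  For a primitive solution with y = 2t even, the numbers u, v = (z +- (x^2 + 18 t^2)) / 2 are
  coprime with u v = 27 t^4, so u = a^4 and v = 27 b^4 (the other split would make -1 a square
  mod 3); this is the auxiliary point (a, b, x) with a^4 < z. For odd y the same applies to the
  solution (2x, 2y, 4z). Conversely, an auxiliary point gives coprime D, E = (m^2 - 9 n^2 +- N) / 2
  with D E = 27 n^4, so {D, E} = {a^4, 27 b^4} and (a, b, |m|) is a primitive solution with |m| < z.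
  Infinite descent on z excludes every primitive solution with y /= 0 (x and z may vanish), and
  dividing by gcd x y reduces the theorem to that case.
*)

lemma coprime_if_no_common_prime_divisor:
  fixes a b :: int
  assumes "\<And>p. prime p \<Longrightarrow> p dvd a \<Longrightarrow> p dvd b \<Longrightarrow> False"
  shows "coprime a b"
proof (rule ccontr)
  assume "\<not> coprime a b"
  then have "\<bar>gcd a b\<bar> \<noteq> 1" by (simp add: coprime_iff_gcd_eq_1)
  then obtain p where "prime p" "p dvd gcd a b" by (rule prime_factor_int)
  then show False using assms by auto
qed

lemma prime_dvd_27_mult_powerD:
  fixes p t :: int
  assumes "prime p" "p dvd 27 * t ^ n"
  shows "p = 3 \<or> p dvd t"
proof -
  have "p dvd 3 ^ 3 \<or> p dvd t ^ n" using assms by (simp add: prime_dvd_mult_iff)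
  then have "p dvd 3 \<or> p dvd t" using assms(1) prime_dvd_power by blast
  then show ?thesis
    using assms(1) by (auto dest: primes_dvd_imp_eq[of p 3])
qed

lemma prime_dvd_add_mult_imp_dvd_both:
  fixes p a b :: "'a :: factorial_semiring"
  assumes "prime p" "p dvd a + b" "p dvd a * b"
  shows "p dvd a \<and> p dvd b"
  using assms by (metis dvd_add_left_iff dvd_add_right_iff prime_dvd_mult_iff)

lemma three_dvd_sum_squares_imp_dvd:
  fixes x y :: int
  assumes "3 dvd x\<^sup>2 + y\<^sup>2"
  shows "3 dvd x"
proof -
  have "(x\<^sup>2 + y\<^sup>2) mod 3 = ((x mod 3)\<^sup>2 mod 3 + (y mod 3)\<^sup>2 mod 3) mod 3"
    by (simp only: power_mod mod_add_eq)
  moreover have "x mod 3 \<in> {0, 1, 2}" "y mod 3 \<in> {0, 1, 2}" by auto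
  ultimately have "x mod 3 = 0" using assms
    by (elim insertE emptyE) (simp_all add: dvd_eq_mod_eq_0)
  then show ?thesis by presburger
qed

lemma is_nth_power_mult_coprime_intD:
  fixes a b :: int
  assumes "coprime a b" "is_nth_power n (a * b)" "a > 0" "b > 0"
  shows "is_nth_power n a"
proof -
  obtain c where c: "a * b = c ^ n" using assms(2) by (elim is_nth_powerE)
  have "int (nat a * nat b) = a * b" using assms(3,4) by simp
  also have "\<dots> = \<bar>a * b\<bar>" using assms(3,4) by simp
  also have "\<dots> = int (nat \<bar>c\<bar> ^ n)" unfolding c by (simp add: power_abs)
  finally have "is_nth_power n (nat a * nat b)" by (simp only: of_nat_eq_iff is_nth_power_nth_power)
  moreover have "coprime (nat a) (nat b)" using assms(1,3,4) by (simp flip: coprime_int_iff)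
  ultimately have "is_nth_power n (nat a)"
    using assms(3,4) is_nth_power_mult_coprime_natD(1) by simp
  then obtain d where d: "nat a = d ^ n" by (elim is_nth_powerE)
  have "a = int (nat a)" using assms(3) by simp
  also have "\<dots> = int d ^ n" by (simp add: d)
  finally show ?thesis by (rule is_nth_powerI)
qed

lemma coprime_factorization_27_fourth_power:
  fixes D E t :: int
  assumes cop: "coprime D E" and pos: "D > 0" "E > 0" and prod: "D * E = 27 * t ^ 4"
    and not_dvd: "\<not> 3 dvd D"
  obtains a b where "D = a ^ 4" "E = 27 * b ^ 4" "coprime a b" "t\<^sup>2 = a\<^sup>2 * b\<^sup>2"
proof -
  have "coprime (3::int) D" using not_dvd by (simp add: prime_imp_coprime)
  then have "coprime ((3::int) ^ 3) D" by (simp only: coprime_power_left_iff simp_thms)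
  moreover have "27 dvd D * E" using prod by simp
  ultimately have "27 dvd E" by (simp add: coprime_dvd_mult_right_iff)
  then obtain F where E: "E = 27 * F" by (elim dvdE)
  with prod pos cop have DF: "D * F = t ^ 4" "F > 0" "coprime D F" by simp_all
  have "coprime F D" using DF(3) coprime_commute by blast
  moreover have "is_nth_power 4 (D * F)" "is_nth_power 4 (F * D)"
    using DF(1) by (simp_all only: mult.commute[of F D] is_nth_power_nth_power)
  ultimately have "is_nth_power 4 D" "is_nth_power 4 F"
    using DF pos is_nth_power_mult_coprime_intD by blast+
  then obtain a b where ab: "D = a ^ 4" "F = b ^ 4" by (auto elim!: is_nth_powerE)
  have "(t\<^sup>2)\<^sup>2 = (a\<^sup>2 * b\<^sup>2)\<^sup>2"
    using DF(1) ab by (simp flip: power_mult power_mult_distrib)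
  then have "t\<^sup>2 = a\<^sup>2 * b\<^sup>2" by (rule power2_eq_imp_eq) simp_all
  moreover have "coprime a b" using DF(3) ab by simp
  ultimately show thesis using that ab E by simp
qed

lemma coprime_factorization_27_fourth_power_cases:
  fixes D E t :: int
  assumes cop: "coprime D E" and pos: "D > 0" "E > 0" and prod: "D * E = 27 * t ^ 4"
  obtains (left) a b where "D = a ^ 4" "E = 27 * b ^ 4" "coprime a b" "t\<^sup>2 = a\<^sup>2 * b\<^sup>2"
    | (right) a b where "D = 27 * a ^ 4" "E = b ^ 4" "coprime a b" "t\<^sup>2 = a\<^sup>2 * b\<^sup>2"
proof (cases "3 dvd D")
  case False
  then show thesis using coprime_factorization_27_fourth_power[OF cop pos prod] left by blast
next
  case True
  have "prime (3::int)" by simp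
  with True cop have "\<not> 3 dvd E" using coprime_common_divisor not_prime_unit by blast
  moreover have "coprime E D" "E * D = 27 * t ^ 4"
    using cop prod by (simp_all only: coprime_commute mult.commute)
  ultimately obtain a b where "E = a ^ 4" "D = 27 * b ^ 4" "coprime a b" "t\<^sup>2 = a\<^sup>2 * b\<^sup>2"
    using coprime_factorization_27_fourth_power[of E D t] pos by blast
  with right[of b a] show thesis by (simp add: coprime_commute mult.commute)
qed

lemma primitive_solution_not_3_dvd:
  fixes x y z :: int
  assumes cop: "coprime x y" and sol: "z\<^sup>2 = x ^ 4 + 9 * x\<^sup>2 * y\<^sup>2 + 27 * y ^ 4"
  shows "\<not> 3 dvd x"
proof
  have prime3: "prime (3::int)" by simp
  assume "3 dvd x"
  then obtain u where x: "x = 3 * u" by (elim dvdE)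
  have "z\<^sup>2 = 3 * (27 * u ^ 4 + 27 * u\<^sup>2 * y\<^sup>2 + 9 * y ^ 4)"
    using sol unfolding x by (simp add: power_mult_distrib)
  then have "3 dvd z" using prime_dvd_power[OF prime3, of z 2] by simp
  then obtain v where z: "z = 3 * v" by (elim dvdE)
  have "9 * v\<^sup>2 = 9 * (3 * (3 * u ^ 4 + 3 * u\<^sup>2 * y\<^sup>2 + y ^ 4))"
    using sol unfolding x z by (simp add: power_mult_distrib)
  then have v: "v\<^sup>2 = 3 * (3 * u ^ 4 + 3 * u\<^sup>2 * y\<^sup>2 + y ^ 4)" by simp
  then have "3 dvd v" using prime_dvd_power[OF prime3, of v 2] by simp
  then obtain w where "v = 3 * w" by (elim dvdE)
  with v have "y ^ 4 = 3 * (w\<^sup>2 - u ^ 4 - u\<^sup>2 * y\<^sup>2)" by (simp add: power_mult_distrib)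
  then have "3 dvd y" using prime_dvd_power[OF prime3, of y 4] by simp
  with \<open>3 dvd x\<close> cop show False using coprime_common_divisor by fastforce
qed

lemma auxiliary_point_from_factorization:
  fixes s t u v :: int
  assumes cop: "coprime s t" and not_dvd: "\<not> 3 dvd s" and pos: "u > 0" "v > 0"
    and prod: "u * v = 27 * t ^ 4" and diff: "u - v = s\<^sup>2 + 18 * t\<^sup>2"
  obtains a b where "coprime a b" "b \<noteq> 0" "s\<^sup>2 = a ^ 4 - 18 * a\<^sup>2 * b\<^sup>2 - 27 * b ^ 4" "u = a ^ 4"
proof -
  have prime3: "prime (3::int)" by simp
  have "coprime u v"
  proof (rule coprime_if_no_common_prime_divisor)
    fix p :: int
    assume p: "prime p" "p dvd u" "p dvd v"
    then have "p dvd s\<^sup>2 + 18 * t\<^sup>2" "p dvd 27 * t ^ 4" by (simp_all flip: diff prod)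
    from p(1) this(2) consider "p = 3" | "p dvd t" by (blast dest: prime_dvd_27_mult_powerD)
    then show False
    proof cases
      case 1
      with \<open>p dvd s\<^sup>2 + 18 * t\<^sup>2\<close> have "3 dvd s\<^sup>2" by (simp add: dvd_add_left_iff)
      with not_dvd prime3 show False using prime_dvd_power by blast
    next
      case 2
      then have "p dvd 18 * t\<^sup>2" by (simp add: power2_eq_square)
      with \<open>p dvd s\<^sup>2 + 18 * t\<^sup>2\<close> have "p dvd s\<^sup>2" by (simp add: dvd_add_left_iff)
      with p(1) have "p dvd s" using prime_dvd_power by blast
      with 2 cop p(1) show False using coprime_common_divisor not_prime_unit by blast
    qed
  qed
  then show thesis
    using pos prod
  proof (cases rule: coprime_factorization_27_fourth_power_cases)
    case (left a b)
    show thesis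
    proof (rule that)
      show "b \<noteq> 0" using left(2) pos(2) by auto
      show "s\<^sup>2 = a ^ 4 - 18 * a\<^sup>2 * b\<^sup>2 - 27 * b ^ 4" using diff left by algebra
    qed (use left in simp_all)
  next
    case (right a b)
    \<comment> \<open>impossible: \<open>-1\<close> would be a square mod 3\<close>
    have "s\<^sup>2 + (b\<^sup>2)\<^sup>2 = 3 * (9 * a ^ 4 - 6 * a\<^sup>2 * b\<^sup>2)" using diff right by algebra
    then have "3 dvd s\<^sup>2 + (b\<^sup>2)\<^sup>2" by simp
    then have "3 dvd s" by (rule three_dvd_sum_squares_imp_dvd)
    with not_dvd show thesis ..
  qed
qed

lemma auxiliary_point_from_solution_with_even_y:
  fixes r s t :: int
  assumes cop: "coprime s t" and not_dvd: "\<not> 3 dvd s" and "t \<noteq> 0" "r > 0"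
    and sol: "r\<^sup>2 = s ^ 4 + 9 * s\<^sup>2 * (2 * t)\<^sup>2 + 27 * (2 * t) ^ 4"
  obtains a b where "coprime a b" "b \<noteq> 0" "s\<^sup>2 = a ^ 4 - 18 * a\<^sup>2 * b\<^sup>2 - 27 * b ^ 4" "a ^ 4 < r"
proof -
  have "r\<^sup>2 - s ^ 4 = 36 * s\<^sup>2 * t\<^sup>2 + 432 * t ^ 4" using sol by (simp add: power_mult_distrib)
  then have "even (r\<^sup>2 - s ^ 4)" by simp
  then have "even (r + s\<^sup>2 + 18 * t\<^sup>2)" by simp
  then obtain u where u: "r + s\<^sup>2 + 18 * t\<^sup>2 = 2 * u" by (elim evenE)
  define v where "v = r - u"
  have sum: "u + v = r" and diff: "u - v = s\<^sup>2 + 18 * t\<^sup>2" using u by (simp_all add: v_def)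
  have "4 * (u * v) = 4 * (27 * t ^ 4)" using sol u unfolding v_def by algebra
  then have prod: "u * v = 27 * t ^ 4" by simp
  with \<open>t \<noteq> 0\<close> have "u * v > 0" by simp
  with sum \<open>r > 0\<close> have pos: "u > 0" "v > 0" by (auto simp: zero_less_mult_iff)
  obtain a b where "coprime a b" "b \<noteq> 0" "s\<^sup>2 = a ^ 4 - 18 * a\<^sup>2 * b\<^sup>2 - 27 * b ^ 4" "u = a ^ 4"
    using auxiliary_point_from_factorization[OF cop not_dvd pos prod diff] .
  moreover have "a ^ 4 < r" using sum pos(2) \<open>u = a ^ 4\<close> by simp
  ultimately show thesis using that by blast
qed

lemma abs_less_if_fourth_power_less:
  fixes m z :: int
  assumes "m ^ 4 < 4 * z" "2 \<le> z"
  shows "\<bar>m\<bar> < z"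
proof -
  have "2 ^ 3 \<le> z ^ 3" using \<open>2 \<le> z\<close> by (rule power_mono) simp
  then have "4 * z \<le> z * z ^ 3" using \<open>2 \<le> z\<close> by simp
  then have "4 * z \<le> z ^ 4" by (simp add: power_numeral_reduce)
  with assms(1) have "\<bar>m\<bar> ^ 4 < z ^ 4" by (simp add: power_even_abs)
  then show "\<bar>m\<bar> < z" by (rule power_less_imp_less_base) (use \<open>2 \<le> z\<close> in simp)
qed

lemma auxiliary_point_from_solution:
  fixes x y z :: int
  assumes cop: "coprime x y" and "y \<noteq> 0" "z > 0"
    and sol: "z\<^sup>2 = x ^ 4 + 9 * x\<^sup>2 * y\<^sup>2 + 27 * y ^ 4"
  obtains m n N where "coprime m n" "n \<noteq> 0" "N\<^sup>2 = m ^ 4 - 18 * m\<^sup>2 * n\<^sup>2 - 27 * n ^ 4"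
    "\<bar>m\<bar> < z"
proof -
  have not_dvd: "\<not> 3 dvd x" using primitive_solution_not_3_dvd[OF cop sol] .
  obtain m n N where aux: "coprime m n" "n \<noteq> 0" "N\<^sup>2 = m ^ 4 - 18 * m\<^sup>2 * n\<^sup>2 - 27 * n ^ 4"
    and small: "m ^ 4 < 4 * z"
  proof (cases "even y")
    case True
    then obtain w where y: "y = 2 * w" by (elim evenE)
    show thesis
    proof (rule auxiliary_point_from_solution_with_even_y)
      show "coprime x w" "w \<noteq> 0" using cop \<open>y \<noteq> 0\<close> by (simp_all add: y)
      show "z\<^sup>2 = x ^ 4 + 9 * x\<^sup>2 * (2 * w)\<^sup>2 + 27 * (2 * w) ^ 4" using sol by (simp add: y)
    qed (use that not_dvd \<open>z > 0\<close> in auto)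
  next
    case False
    show thesis
    proof (rule auxiliary_point_from_solution_with_even_y)
      show "coprime (2 * x) y" using cop False by simp
      show "\<not> 3 dvd 2 * x" using not_dvd by presburger
      show "(4 * z)\<^sup>2 = (2 * x) ^ 4 + 9 * (2 * x)\<^sup>2 * (2 * y)\<^sup>2 + 27 * (2 * y) ^ 4"
        using sol by (simp add: power_mult_distrib)
      show "4 * z > 0" using \<open>z > 0\<close> by simp
    qed (use that[of _ _ "2 * x"] \<open>y \<noteq> 0\<close> in auto)
  qed
  have "y ^ 4 > 0" "x ^ 4 \<ge> 0" "x\<^sup>2 * y\<^sup>2 \<ge> 0" using \<open>y \<noteq> 0\<close> by simp_all
  then have "z\<^sup>2 \<ge> 27" using sol by linarith
  then have "z \<ge> 2" using \<open>z > 0\<close> by (cases "z = 1") auto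
  with small have "\<bar>m\<bar> < z" by (rule abs_less_if_fourth_power_less)
  with aux that show thesis by blast
qed

lemma coprime_if_mult_eq_27_fourth_power_and_add_eq:
  fixes m n D E :: int
  assumes cop: "coprime m n" and prod: "D * E = 27 * n ^ 4" and sum: "D + E = m\<^sup>2 - 9 * n\<^sup>2"
  shows "coprime D E"
proof (rule coprime_if_no_common_prime_divisor)
  have prime3: "prime (3::int)" by simp
  fix p :: int
  assume p: "prime p" "p dvd D" "p dvd E"
  then have "p dvd m\<^sup>2 - 9 * n\<^sup>2" "p dvd 27 * n ^ 4" by (simp_all flip: sum prod)
  from p(1) this(2) consider "p = 3" | "p dvd n" by (blast dest: prime_dvd_27_mult_powerD)
  then show False
  proof cases
    case 1
    with p have "3 dvd D" "3 dvd E" by simp_all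
    then obtain D1 E1 where D1: "D = 3 * D1" and E1: "E = 3 * E1" by (elim dvdE)
    have "3 dvd 9 * n\<^sup>2" by simp
    with 1 \<open>p dvd m\<^sup>2 - 9 * n\<^sup>2\<close> have "3 dvd m\<^sup>2" by (metis dvd_add diff_add_cancel)
    then have "3 dvd m" using prime3 prime_dvd_power by blast
    then obtain k where m: "m = 3 * k" by (elim dvdE)
    have "D1 + E1 = 3 * (k\<^sup>2 - n\<^sup>2)" using sum unfolding D1 E1 m by algebra
    then have "3 dvd D1 + E1" by simp
    moreover have DE1: "D1 * E1 = 3 * n ^ 4" using prod unfolding D1 E1 by simp
    then have "3 dvd D1 * E1" by simp
    ultimately have "3 dvd D1 \<and> 3 dvd E1" by (rule prime_dvd_add_mult_imp_dvd_both[OF prime3])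
    then have "3 * 3 dvd 3 * n ^ 4" unfolding DE1[symmetric] by (blast intro: mult_dvd_mono)
    then have "3 dvd n ^ 4" by (subst (asm) dvd_times_left_cancel_iff) simp_all
    then have "3 dvd n" using prime3 prime_dvd_power by blast
    with \<open>3 dvd m\<close> cop prime3 show False using coprime_common_divisor not_prime_unit by blast
  next
    case 2
    then have "p dvd 9 * n\<^sup>2" by (simp add: power2_eq_square)
    with \<open>p dvd m\<^sup>2 - 9 * n\<^sup>2\<close> have "p dvd m\<^sup>2" by (metis dvd_add diff_add_cancel)
    with p(1) have "p dvd m" using prime_dvd_power by blast
    with 2 cop p(1) show False using coprime_common_divisor not_prime_unit by blast
  qed
qed

lemma solution_from_auxiliary_point:
  fixes m n N :: int
  assumes cop: "coprime m n" and "n \<noteq> 0"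
    and aux: "N\<^sup>2 = m ^ 4 - 18 * m\<^sup>2 * n\<^sup>2 - 27 * n ^ 4"
  obtains a b where "coprime a b" "b \<noteq> 0" "m\<^sup>2 = a ^ 4 + 9 * a\<^sup>2 * b\<^sup>2 + 27 * b ^ 4"
proof -
  define S where "S = m\<^sup>2 - 9 * n\<^sup>2"
  have "(m\<^sup>2 - 18 * n\<^sup>2) * m\<^sup>2 = N\<^sup>2 + 27 * n ^ 4" using aux by algebra
  moreover have "N\<^sup>2 + 27 * n ^ 4 > 0" using \<open>n \<noteq> 0\<close> by (simp add: add_nonneg_pos)
  ultimately have "(m\<^sup>2 - 18 * n\<^sup>2) * m\<^sup>2 > 0" by simp
  then have "m\<^sup>2 - 18 * n\<^sup>2 > 0" using zero_le_power2[of m] by (auto simp: zero_less_mult_iff)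
  then have "S > 0" unfolding S_def using zero_le_power2[of n] by linarith
  have SN: "(S + N) * (S - N) = 108 * n ^ 4" unfolding S_def using aux by algebra
  then have "even (S + N)" by (metis even_mult_iff even_numeral even_diff)
  then obtain D where D: "S + N = 2 * D" by (elim evenE)
  define E where "E = S - D"
  have sum: "D + E = S" by (simp add: E_def)
  have "4 * (D * E) = 4 * (27 * n ^ 4)" using SN D unfolding E_def by algebra
  then have prod: "D * E = 27 * n ^ 4" by linarith
  with \<open>n \<noteq> 0\<close> have "D * E > 0" by simp
  with sum \<open>S > 0\<close> have pos: "D > 0" "E > 0" by (auto simp: zero_less_mult_iff)
  have "coprime D E" using cop prod sum unfolding S_def by (rule coprime_if_mult_eq_27_fourth_power_and_add_eq)
  then obtain a b where ab: "coprime a b" "b \<noteq> 0" "n\<^sup>2 = a\<^sup>2 * b\<^sup>2" "D + E = a ^ 4 + 27 * b ^ 4"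
    using pos prod
  proof (cases rule: coprime_factorization_27_fourth_power_cases)
    case (left a b)
    with pos(2) show thesis by (intro that) auto
  next
    case (right a b)
    with pos(1) show thesis by (intro that[of b a]) (auto simp: coprime_commute)
  qed
  have "m\<^sup>2 = a ^ 4 + 9 * a\<^sup>2 * b\<^sup>2 + 27 * b ^ 4" using ab(3,4) sum unfolding S_def by algebra
  with ab(1,2) that show thesis by blast
qed

lemma no_primitive_solution:
  fixes x y z :: int
  assumes "coprime x y" "y \<noteq> 0"
  shows "z\<^sup>2 \<noteq> x ^ 4 + 9 * x\<^sup>2 * y\<^sup>2 + 27 * y ^ 4"
  using assms
proof (induction "nat \<bar>z\<bar>" arbitrary: x y z rule: less_induct)
  case less
  show ?case
  proof
    assume sol: "z\<^sup>2 = x ^ 4 + 9 * x\<^sup>2 * y\<^sup>2 + 27 * y ^ 4"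
    have "z\<^sup>2 > 0" using sol \<open>y \<noteq> 0\<close> by (simp add: add_nonneg_pos)
    then have "\<bar>z\<bar> > 0" by simp
    obtain m n N where aux: "coprime m n" "n \<noteq> 0" "N\<^sup>2 = m ^ 4 - 18 * m\<^sup>2 * n\<^sup>2 - 27 * n ^ 4"
      and smaller: "\<bar>m\<bar> < \<bar>z\<bar>"
      using auxiliary_point_from_solution[of x y "\<bar>z\<bar>"] less.prems \<open>\<bar>z\<bar> > 0\<close> sol by auto
    obtain a b where "coprime a b" "b \<noteq> 0" "m\<^sup>2 = a ^ 4 + 9 * a\<^sup>2 * b\<^sup>2 + 27 * b ^ 4"
      using solution_from_auxiliary_point[OF aux] .
    moreover have "nat \<bar>m\<bar> < nat \<bar>z\<bar>" using smaller by simp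
    ultimately show False using less.hyps by blast
  qed
qed

lemma primitive_solution_from_solution:
  fixes x y z :: int
  assumes "y \<noteq> 0" and sol: "z\<^sup>2 = x ^ 4 + 9 * x\<^sup>2 * y\<^sup>2 + 27 * y ^ 4"
  obtains x' y' z' :: int where "coprime x' y'" "y' \<noteq> 0" "z'\<^sup>2 = x' ^ 4 + 9 * x'\<^sup>2 * y'\<^sup>2 + 27 * y' ^ 4"
proof -
  define d where "d = gcd x y"
  have "d \<noteq> 0" using \<open>y \<noteq> 0\<close> by (simp add: d_def)
  then obtain x' y' where x: "x = x' * d" and y: "y = y' * d" and "coprime x' y'"
    unfolding d_def using gcd_coprime_exists by blast
  have "is_square ((d\<^sup>2)\<^sup>2 * (x' ^ 4 + 9 * x'\<^sup>2 * y'\<^sup>2 + 27 * y' ^ 4))"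
    using sol unfolding x y by (intro is_nth_powerI[of _ z]) algebra
  moreover have "is_square ((d\<^sup>2)\<^sup>2)" by (rule is_nth_power_nth_power)
  moreover have "(d\<^sup>2)\<^sup>2 \<noteq> 0" using \<open>d \<noteq> 0\<close> by simp
  ultimately have "is_square (x' ^ 4 + 9 * x'\<^sup>2 * y'\<^sup>2 + 27 * y' ^ 4)"
    using is_nth_power_mult_cancel_left by blast
  then obtain z' where "x' ^ 4 + 9 * x'\<^sup>2 * y'\<^sup>2 + 27 * y' ^ 4 = z'\<^sup>2"
    by (elim is_nth_powerE)
  moreover have "y' \<noteq> 0" using \<open>y \<noteq> 0\<close> y by simp
  ultimately show thesis using \<open>coprime x' y'\<close> that by simp
qed

theorem mainTheorem2:
  shows "\<not> (\<exists>x y z :: int. x \<noteq> 0 \<and> y \<noteq> 0 \<and> z \<noteq> 0 \<and>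
           x ^ 4 + 9 * x ^ 2 * y ^ 2 + 27 * y ^ 4 = z ^ 2)"
proof
  assume "\<exists>x y z :: int. x \<noteq> 0 \<and> y \<noteq> 0 \<and> z \<noteq> 0 \<and>
           x ^ 4 + 9 * x ^ 2 * y ^ 2 + 27 * y ^ 4 = z ^ 2"
  then obtain x y z :: int where "y \<noteq> 0" "z\<^sup>2 = x ^ 4 + 9 * x\<^sup>2 * y\<^sup>2 + 27 * y ^ 4"
    by (metis (no_types))
  then obtain x' y' z' :: int where "coprime x' y'" "y' \<noteq> 0"
    and "z'\<^sup>2 = x' ^ 4 + 9 * x'\<^sup>2 * y'\<^sup>2 + 27 * y' ^ 4"
    by (rule primitive_solution_from_solution)
  with no_primitive_solution show False by blast
qed

end
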